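(* Let $d$ be a positive square-free integer with $d\equiv 7\pmod 8$, let $K=\mathbb{Q}[\sqrt{-d}]$ with ring of integers $\mathfrak{o}_K$, and let $u=u_1+u_ii+u_jj+u_kk\in\mathcal{U}(\mathbb{H}(\mathfrak{o}_K))$. Then: (1) $u^2=2u_1u-N(u)$; (2) if $N(u)=1$, then $u$ is a torsion unit if and only if $u_1\in\{-1,0,1\}$ and the order of $u$ is $1$, $2$ or $4$; (3) if $N(u)=-1$, then $u$ has infinite order.
   Context: $\mathbb{H}(K)=\left(\frac{-1,-1}{K}\right)$ is the quaternion algebra over $K$ with $K$-basis $1,i,j,k$, $i^2=j^2=-1$, $k=ji=-ij$; $\mathbb{H}(\mathfrak{o}_K)$ is the set of $\mathfrak{o}_K$-linear combinations of $1,i,j,k$. The norm is $N(x_1+x_ii+x_jj+x_kk)=x_1^2+x_i^2+x_j^2+x_k^2$. *)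

theory Defs
  imports Complex_Main "HOL-Computational_Algebra.Polynomial" "HOL-Computational_Algebra.Squarefree"
begin

definition quadK :: "int \<Rightarrow> complex set" where
  "quadK d = {of_real (of_rat p) + of_real (of_rat q) * (\<i> * of_real (sqrt (of_int d))) | p q. True}"

definition ringOfIntegers :: "int \<Rightarrow> complex set" where
  "ringOfIntegers d = {z \<in> quadK d. algebraic_int z}"

text \<open>Quaternions x1 + xi i + xj j + xk k with complex coefficients; the quaternion algebra
  (-1,-1 / K) with i^2 = j^2 = -1, k = j i = - i j.\<close>

datatype cquat = CQ (q1: complex) (qi: complex) (qj: complex) (qk: complex)

definition qone :: cquat where "qone = CQ 1 0 0 0"

definition qscal :: "complex \<Rightarrow> cquat" where "qscal c = CQ c 0 0 0"

definition qmul :: "cquat \<Rightarrow> cquat \<Rightarrow> cquat" where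
  "qmul a b = CQ
     (q1 a * q1 b - qi a * qi b - qj a * qj b - qk a * qk b)
     (q1 a * qi b + qi a * q1 b - qj a * qk b + qk a * qj b)
     (q1 a * qj b + qj a * q1 b + qi a * qk b - qk a * qi b)
     (q1 a * qk b + qk a * q1 b - qi a * qj b + qj a * qi b)"

definition qsmul :: "complex \<Rightarrow> cquat \<Rightarrow> cquat" where
  "qsmul c a = CQ (c * q1 a) (c * qi a) (c * qj a) (c * qk a)"

definition qsub :: "cquat \<Rightarrow> cquat \<Rightarrow> cquat" where
  "qsub a b = CQ (q1 a - q1 b) (qi a - qi b) (qj a - qj b) (qk a - qk b)"

fun qpow :: "cquat \<Rightarrow> nat \<Rightarrow> cquat" where
  "qpow a 0 = qone"
| "qpow a (Suc n) = qmul a (qpow a n)"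

definition qnorm :: "cquat \<Rightarrow> complex" where
  "qnorm a = q1 a ^ 2 + qi a ^ 2 + qj a ^ 2 + qk a ^ 2"

definition quatOver :: "complex set \<Rightarrow> cquat set" where
  "quatOver R = {a. q1 a \<in> R \<and> qi a \<in> R \<and> qj a \<in> R \<and> qk a \<in> R}"

definition quatUnits :: "complex set \<Rightarrow> cquat set" where
  "quatUnits R = {u \<in> quatOver R. \<exists>v \<in> quatOver R. qmul u v = qone \<and> qmul v u = qone}"

definition qtorsion :: "cquat \<Rightarrow> bool" where
  "qtorsion u \<longleftrightarrow> (\<exists>n>0. qpow u n = qone)"

definition qhas_order :: "cquat \<Rightarrow> nat \<Rightarrow> bool" where
  "qhas_order u n \<longleftrightarrow> n > 0 \<and> qpow u n = qone \<and> (\<forall>m. 0 < m \<and> m < n \<longrightarrow> qpow u m \<noteq> qone)"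

end

theory Submission
  imports Defs
begin

text \<open>Every quaternion satisfies u^2 = 2 u1 u - N(u), so u^(n+1) = U(n+1) u - N(u) U(n) with
  the Lucas sequence U of (2 u1, N(u)). If u is a non-scalar unit of finite order m with
  N(u) = 1 or N(u) = -1, then U(m) = 0; hence both roots of x^2 - 2 u1 x + N(u) are m-th roots of
  unity, they are distinct, and 2 u1 = l + N(u) conj(l) with |l| = 1.

  For N(u) = 1 this makes u1 a real algebraic integer of K with |u1| <= 1 and u1^2 ~= 1, so u1 = 0
  and u has order 4. For N(u) = -1 it makes u1 purely imaginary with |u1| <= 1; since the
  elements of o_K have imaginary part in (sqrt d / 2) Z and d >= 7, u1 = 0, and then
  -1 = ui^2 + uj^2 + uk^2 would be a sum of three squares in o_K. That is impossible for
  d = 7 mod 8: writing the coefficients as (P + Q sqrt(-d)) / 2 and replacing sqrt(-d) by some t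
  with t^2 = -d mod 32 yields three integer squares summing to 28 mod 32.\<close>

section \<open>Non-real quadratic algebraic integers\<close>

lemma map_poly_of_int_add:
  "map_poly (of_int :: int \<Rightarrow> 'a::ring_1) (p + q) = map_poly of_int p + map_poly of_int q"
  by (rule poly_eqI) (simp add: coeff_map_poly)

lemma map_poly_of_int_mult:
  "map_poly (of_int :: int \<Rightarrow> 'a::comm_ring_1) (p * q) = map_poly of_int p * map_poly of_int q"
proof (induction p)
  case (pCons a p)
  have "map_poly (of_int :: int \<Rightarrow> 'a) (smult a q) = smult (of_int a) (map_poly of_int q)"
    by (rule poly_eqI) (simp add: coeff_map_poly)
  with pCons show ?case
    by (simp add: map_poly_of_int_add map_poly_pCons)
qed simp

lemma content_int_nonneg: "content (p :: int poly) \<ge> 0"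
  using normalize_content[of p] by (metis abs_ge_zero normalize_int_def)

lemma content_eq_abs_lead_coeff_if_dvd_smult_monic:
  fixes f g h :: "int poly"
  assumes fgh: "smult a f = g * h" and a: "a \<noteq> 0" and f: "lead_coeff f = 1"
  shows "content g = \<bar>lead_coeff g\<bar>"
proof -
  have "content f = 1"
    using content_dvd_coeff[of f "degree f"] f content_int_nonneg[of f] by simp
  then have prod: "content g * content h = \<bar>lead_coeff g\<bar> * \<bar>lead_coeff h\<bar>"
    using arg_cong[OF fgh, of content] arg_cong[OF fgh, of lead_coeff] f a
    by (simp add: content_mult lead_coeff_mult abs_mult)
  have "g \<noteq> 0" "h \<noteq> 0" using fgh a f by auto
  have le: "content p \<le> \<bar>lead_coeff p\<bar>" and pos: "content p > 0" if "p \<noteq> 0" for p :: "int poly"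
  proof -
    show "content p > 0" using that content_int_nonneg[of p] by (simp add: order_less_le)
    show "content p \<le> \<bar>lead_coeff p\<bar>"
      using dvd_imp_le_int[of "lead_coeff p" "content p"] that content_int_nonneg[of p] by simp
  qed
  show ?thesis
  proof (rule ccontr)
    assume "content g \<noteq> \<bar>lead_coeff g\<bar>"
    then have "content g < \<bar>lead_coeff g\<bar>" using le \<open>g \<noteq> 0\<close> by fastforce
    then have "content g * content h < \<bar>lead_coeff g\<bar> * content h"
      using pos \<open>h \<noteq> 0\<close> by simp
    also have "\<dots> \<le> \<bar>lead_coeff g\<bar> * \<bar>lead_coeff h\<bar>"
      using le \<open>h \<noteq> 0\<close> by (simp add: mult_left_mono)
    finally show False using prod by simp
  qed
qed

lemma int_poly_linear_nonreal_root_eq_0: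
  fixes r :: "int poly"
  assumes "degree r \<le> 1" and root: "poly (map_poly of_int r) z = 0" and "Im z \<noteq> 0"
  shows "r = 0"
proof -
  have r: "r = [:coeff r 0, coeff r 1:]"
    using \<open>degree r \<le> 1\<close> by (intro poly_eqI) (auto simp: coeff_pCons coeff_eq_0 split: nat.split)
  have lin: "of_int (coeff r 0) + of_int (coeff r 1) * z = 0"
    using root by (subst (asm) r) (simp add: map_poly_pCons mult.commute)
  have "of_int (coeff r 1) * Im z = Im (of_int (coeff r 0) + of_int (coeff r 1) * z)"
    by simp
  then have "of_int (coeff r 1) * Im z = 0" by (simp only: lin zero_complex.sel)
  then have "coeff r 1 = 0" using \<open>Im z \<noteq> 0\<close> by simp
  with lin show ?thesis by (subst r) simp
qed

lemma algebraic_int_nonreal_quadratic_content: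
  fixes g :: "int poly"
  assumes z: "algebraic_int z" "Im z \<noteq> 0"
    and g: "degree g = 2" "poly (map_poly of_int g) z = 0"
  shows "content g = \<bar>lead_coeff g\<bar>"
proof -
  obtain f where f: "poly (map_poly of_int f) z = 0" "lead_coeff f = 1"
    using z(1) algebraic_int_altdef_ipoly by blast
  have "g \<noteq> 0" using g(1) by auto
  obtain a h where a: "a \<noteq> 0" and division: "smult a f = g * h + pseudo_mod f g"
    using pseudo_mod(1)[OF \<open>g \<noteq> 0\<close>, of f] by blast
  (* The pseudo-remainder is a linear integer polynomial vanishing at the non-real z. *)
  have "pseudo_mod f g = 0"
  proof (rule int_poly_linear_nonreal_root_eq_0)
    show "degree (pseudo_mod f g) \<le> 1"
      using pseudo_mod(2)[OF \<open>g \<noteq> 0\<close>, of f] g(1) by auto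
    have "poly (map_poly (of_int :: int \<Rightarrow> complex) (smult a f)) z = 0"
      using f(1) by (simp add: map_poly_smult)
    then show "poly (map_poly of_int (pseudo_mod f g)) z = 0"
      by (simp add: division map_poly_of_int_add map_poly_of_int_mult g(2))
  qed (use z in auto)
  then show ?thesis
    using content_eq_abs_lead_coeff_if_dvd_smult_monic division a f(2) by simp
qed

lemma algebraic_int_nonreal_quadratic_coeffs_Ints:
  fixes z :: complex and s n :: rat
  assumes z: "algebraic_int z" "Im z \<noteq> 0"
    and root: "z\<^sup>2 - of_rat s * z + of_rat n = 0"
  shows "s \<in> \<int>" "n \<in> \<int>"
proof -
  obtain s1 s2 where s: "s2 > 0" "s = of_int s1 / of_int s2"
    by (metis quotient_of_denom_pos quotient_of_div surj_pair)
  obtain n1 n2 where n: "n2 > 0" "n = of_int n1 / of_int n2"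
    by (metis quotient_of_denom_pos quotient_of_div surj_pair)
  define g where "g = [:n1 * s2, - (s1 * n2), s2 * n2:]"
  have g: "degree g = 2" "lead_coeff g = s2 * n2"
    using s(1) n(1) by (simp_all add: g_def)
  have "poly (map_poly of_int g) z = of_int (s2 * n2) * (z\<^sup>2 - of_rat s * z + of_rat n)"
    using s(1) n(1) unfolding s(2) n(2)
    by (simp add: g_def map_poly_pCons of_rat_divide field_simps power2_eq_square)
  then have "content g = s2 * n2"
    using algebraic_int_nonreal_quadratic_content[OF z g(1)] g(2) s(1) n(1) root by simp
  then have "s2 * n2 dvd s2 * n1" "n2 * s2 dvd n2 * s1"
    using content_dvd_coeff[of g 0] content_dvd_coeff[of g 1]
    by (simp_all add: g_def mult.commute)
  then have "n2 dvd n1" "s2 dvd s1" using s(1) n(1) by simp_all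
  then show "s \<in> \<int>" "n \<in> \<int>"
    using s(2) n(2) of_int_divide_in_Ints by simp_all
qed

section \<open>The ring of integers of \<open>\<rat>(\<surd>-d)\<close>\<close>

lemma squarefree_square_mult_Ints_imp_Ints:
  fixes r :: rat
  assumes "squarefree d" and "r\<^sup>2 * of_int d \<in> \<int>"
  shows "r \<in> \<int>"
proof -
  obtain a b where b: "b > 0" and r: "r = of_int a / of_int b" and "coprime a b"
    by (metis quotient_of_denom_pos quotient_of_div quotient_of_coprime surj_pair)
  obtain k where "r\<^sup>2 * of_int d = of_int k" using assms(2) by (auto elim: Ints_cases)
  then have "(of_int (a\<^sup>2 * d) :: rat) = of_int (k * b\<^sup>2)"
    using b unfolding r by (simp add: field_simps power2_eq_square)
  then have "a\<^sup>2 * d = b\<^sup>2 * k" by (simp only: of_int_eq_iff mult.commute)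
  then have "b\<^sup>2 dvd a\<^sup>2 * d" by simp
  moreover have "coprime (b\<^sup>2) (a\<^sup>2)" using \<open>coprime a b\<close> by (simp add: coprime_commute)
  ultimately have "b\<^sup>2 dvd d" using coprime_dvd_mult_right_iff by blast
  then have "is_unit b" using assms(1) squarefreeD by blast
  then show ?thesis using r b by simp
qed

(* Only at type complex: at type real this orientation would loop in the simplifier. *)
lemma complex_of_rat_eq_of_real: "(of_rat r :: complex) = of_real (of_rat r)"
  by (cases r) (simp add: of_rat_rat of_real_divide)

lemma ringOfIntegersE:
  assumes "z \<in> ringOfIntegers d"
  obtains p q :: rat where "algebraic_int z"
    and "Re z = of_rat p" and "Im z = of_rat q * sqrt (of_int d)"
proof -
  obtain p q :: rat where "algebraic_int z"
    and "z = of_real (of_rat p) + of_real (of_rat q) * (\<i> * of_real (sqrt (of_int d)))"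
    using assms unfolding ringOfIntegers_def quadK_def by blast
  then show thesis using that[of p q] by simp
qed

lemma ringOfIntegers_real_imp_Ints:
  assumes "d > 0" and z: "z \<in> ringOfIntegers d" and "Im z = 0"
  shows "z \<in> \<int>"
proof -
  obtain p q where "algebraic_int z" "Re z = of_rat p" "Im z = of_rat q * sqrt (of_int d)"
    using z by (rule ringOfIntegersE)
  then have "z = of_real (of_rat p)" using assms by (simp add: complex_eq_iff)
  then have "z \<in> \<rat>" by simp
  with \<open>algebraic_int z\<close> show ?thesis by (rule rational_algebraic_int_is_int)
qed

lemma quadK_coords_quadratic:
  assumes "Re z = of_rat p" "Im z = of_rat q * sqrt (of_int d)" "d \<ge> 0"
  shows "z\<^sup>2 - of_rat (2 * p) * z + of_rat (p\<^sup>2 + q\<^sup>2 * of_int d) = 0"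
  using assms
  by (simp add: complex_eq_iff complex_of_rat_eq_of_real of_rat_add of_rat_mult of_rat_power
      power2_eq_square algebra_simps)

lemma ringOfIntegers_half_integral:
  assumes "d > 0" and "squarefree d" and z: "z \<in> ringOfIntegers d"
  obtains P Q :: int where "Re z = of_int P / 2" "Im z = of_int Q * sqrt (of_int d) / 2"
proof (cases "Im z = 0")
  case True
  then obtain k where "z = of_int k"
    using ringOfIntegers_real_imp_Ints[OF \<open>d > 0\<close> z] by (auto elim: Ints_cases)
  then show ?thesis using that[of "2 * k" 0] by simp
next
  case False
  obtain p q where "algebraic_int z" and
    coords: "Re z = of_rat p" "Im z = of_rat q * sqrt (of_int d)"
    using z by (rule ringOfIntegersE)
  then have "z\<^sup>2 - of_rat (2 * p) * z + of_rat (p\<^sup>2 + q\<^sup>2 * of_int d) = 0"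
    using \<open>d > 0\<close> by (intro quadK_coords_quadratic) simp_all
  then have ints: "2 * p \<in> \<int>" "p\<^sup>2 + q\<^sup>2 * of_int d \<in> \<int>"
    using algebraic_int_nonreal_quadratic_coeffs_Ints \<open>algebraic_int z\<close> False by blast+
  have "(2 * q)\<^sup>2 * of_int d = 4 * (p\<^sup>2 + q\<^sup>2 * of_int d) - (2 * p)\<^sup>2"
    by (simp add: power2_eq_square algebra_simps)
  also have "\<dots> \<in> \<int>" 
    by (rule Ints_diff[OF Ints_mult[OF Ints_numeral ints(2)] Ints_power[OF ints(1)]])
  finally have "2 * q \<in> \<int>"
    using squarefree_square_mult_Ints_imp_Ints \<open>squarefree d\<close> by blast
  then obtain Q where "2 * q = of_int Q" by (rule Ints_cases)
  then have "2 * of_rat q = (of_int Q :: real)"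
    by (metis of_rat_mult of_rat_numeral_eq of_rat_of_int_eq)
  then have "Im z = of_int Q * sqrt (of_int d) / 2" using coords by simp
  moreover obtain P where "2 * p = of_int P" using ints(1) by (rule Ints_cases)
  then have "2 * of_rat p = (of_int P :: real)"
    by (metis of_rat_mult of_rat_numeral_eq of_rat_of_int_eq)
  then have "Re z = of_int P / 2" using coords by simp
  ultimately show ?thesis using that by blast
qed

lemma zero_in_ringOfIntegers: "0 \<in> ringOfIntegers d"
proof -
  have "(0::complex) = of_real (of_rat 0) + of_real (of_rat 0) * (\<i> * of_real (sqrt (of_int d)))"
    by simp
  then show ?thesis unfolding ringOfIntegers_def quadK_def by blast
qed

lemma ringOfIntegers_Im_eq_0_if_small:
  assumes "d > 4" "squarefree d" "z \<in> ringOfIntegers d" "\<bar>Im z\<bar> \<le> 1"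
  shows "Im z = 0"
proof -
  obtain P Q where Im: "Im z = of_int Q * sqrt (of_int d) / 2"
    using ringOfIntegers_half_integral[of d z] assms(1-3) by auto
  have "sqrt (of_int d) > 2" by (rule real_less_rsqrt) (use assms(1) in simp)
  show ?thesis
  proof (rule ccontr)
    assume "Im z \<noteq> 0"
    then have "1 \<le> \<bar>of_int Q :: real\<bar>" using Im by auto
    then have "sqrt (of_int d) \<le> \<bar>of_int Q\<bar> * sqrt (of_int d)"
      using mult_right_mono[of 1 "\<bar>of_int Q\<bar>" "sqrt (of_int d)"] assms(1) by simp
    then have "\<bar>Im z\<bar> > 1"
      using Im \<open>sqrt (of_int d) > 2\<close> by (simp add: abs_mult)
    with assms(4) show False by simp
  qed
qed

section \<open>Sums of three squares\<close>

lemma square_mod_8: "(x::int)\<^sup>2 mod 8 \<in> (if even x then {0, 4} else {1})"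
proof -
  have "x\<^sup>2 mod 8 = (x mod 8)\<^sup>2 mod 8" by (simp add: power_mod)
  moreover have "x mod 8 \<in> {0, 1, 2, 3, 4, 5, 6, 7}" by auto
  moreover have "even x \<longleftrightarrow> even (x mod 8)" by presburger
  ultimately show ?thesis by auto
qed

lemma sum_three_squares_mod_8:
  "((x::int)\<^sup>2 + y\<^sup>2 + z\<^sup>2) mod 8 = (x\<^sup>2 mod 8 + y\<^sup>2 mod 8 + z\<^sup>2 mod 8) mod 8"
  by (metis mod_add_eq mod_add_left_eq)

lemma sum_three_squares_mod_8_ne_7: "((x::int)\<^sup>2 + y\<^sup>2 + z\<^sup>2) mod 8 \<noteq> 7"
  using square_mod_8[of x] square_mod_8[of y] square_mod_8[of z]
  by (auto simp: sum_three_squares_mod_8 split: if_splits)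

lemma sum_three_squares_mod_32_ne_28: "((x::int)\<^sup>2 + y\<^sup>2 + z\<^sup>2) mod 32 \<noteq> 28"
proof
  assume mod32: "(x\<^sup>2 + y\<^sup>2 + z\<^sup>2) mod 32 = 28"
  then have "(x\<^sup>2 + y\<^sup>2 + z\<^sup>2) mod 8 = 4"
    using mod_mod_cancel[of 8 32 "x\<^sup>2 + y\<^sup>2 + z\<^sup>2"] by simp
  then have "even x" "even y" "even z"
    using square_mod_8[of x] square_mod_8[of y] square_mod_8[of z]
    by (auto simp: sum_three_squares_mod_8 split: if_splits)
  then obtain a b c where "x = 2 * a" "y = 2 * b" "z = 2 * c" by (auto elim!: evenE)
  then have "(4 * (a\<^sup>2 + b\<^sup>2 + c\<^sup>2)) mod (4 * 8) = 4 * 7"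
    using mod32 by (simp add: power_mult_distrib algebra_simps)
  then have "(a\<^sup>2 + b\<^sup>2 + c\<^sup>2) mod 8 = 7" by (simp only: mod_mult_mult1)
  then show False using sum_three_squares_mod_8_ne_7 by blast
qed

lemma minus_is_square_mod_32:
  fixes d :: int
  assumes "d mod 8 = 7"
  obtains t :: int where "32 dvd t\<^sup>2 + d"
proof -
  have "32 dvd 5\<^sup>2 + d \<or> 32 dvd 7\<^sup>2 + d \<or> 32 dvd 3\<^sup>2 + d \<or> 32 dvd 1\<^sup>2 + d"
    using assms unfolding power2_eq_square by presburger
  then show thesis using that by blast
qed

lemma three_squares_quadratic_form_ne_minus_4:
  fixes d P1 P2 P3 Q1 Q2 Q3 :: int
  assumes d: "d mod 8 = 7"
    and norm: "(P1\<^sup>2 - d * Q1\<^sup>2) + (P2\<^sup>2 - d * Q2\<^sup>2) + (P3\<^sup>2 - d * Q3\<^sup>2) = -4"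
    and trace: "P1 * Q1 + P2 * Q2 + P3 * Q3 = 0"
  shows False
proof -
  obtain t k where t: "t\<^sup>2 + d = 32 * k"
    using minus_is_square_mod_32[OF d] by (metis dvd_def)
  have "(P1 + t * Q1)\<^sup>2 + (P2 + t * Q2)\<^sup>2 + (P3 + t * Q3)\<^sup>2
      = ((P1\<^sup>2 - d * Q1\<^sup>2) + (P2\<^sup>2 - d * Q2\<^sup>2) + (P3\<^sup>2 - d * Q3\<^sup>2))
        + 2 * t * (P1 * Q1 + P2 * Q2 + P3 * Q3) + (t\<^sup>2 + d) * (Q1\<^sup>2 + Q2\<^sup>2 + Q3\<^sup>2)"
    by (simp add: power2_eq_square algebra_simps)
  also have "\<dots> = 32 * (k * (Q1\<^sup>2 + Q2\<^sup>2 + Q3\<^sup>2)) - 4"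
    using norm trace t by simp
  finally have "((P1 + t * Q1)\<^sup>2 + (P2 + t * Q2)\<^sup>2 + (P3 + t * Q3)\<^sup>2) mod 32 = 28"
    by (simp add: mod_diff_eq[symmetric])
  then show False using sum_three_squares_mod_32_ne_28 by blast
qed

lemma Re_Im_square_half_integral:
  assumes "d \<ge> 0" "Re z = of_int P / 2" "Im z = of_int Q * sqrt (of_int d) / 2"
  shows "4 * Re (z\<^sup>2) = of_int (P\<^sup>2 - d * Q\<^sup>2)"
    and "2 * Im (z\<^sup>2) = of_int (P * Q) * sqrt (of_int d)"
  unfolding Re_power2 Im_power2 assms(2,3)
  using assms(1) by (simp_all add: power_mult_distrib power_divide)

lemma ringOfIntegers_sum_three_squares_ne_minus_1:
  assumes "d > 0" "squarefree d" "d mod 8 = 7"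
    and "x \<in> ringOfIntegers d" "y \<in> ringOfIntegers d" "z \<in> ringOfIntegers d"
  shows "x\<^sup>2 + y\<^sup>2 + z\<^sup>2 \<noteq> -1"
proof
  assume sum: "x\<^sup>2 + y\<^sup>2 + z\<^sup>2 = -1"
  obtain P1 Q1 where 1: "Re x = of_int P1 / 2" "Im x = of_int Q1 * sqrt (of_int d) / 2"
    using ringOfIntegers_half_integral assms(1,2,4) by blast
  obtain P2 Q2 where 2: "Re y = of_int P2 / 2" "Im y = of_int Q2 * sqrt (of_int d) / 2"
    using ringOfIntegers_half_integral assms(1,2,5) by blast
  obtain P3 Q3 where 3: "Re z = of_int P3 / 2" "Im z = of_int Q3 * sqrt (of_int d) / 2"
    using ringOfIntegers_half_integral assms(1,2,6) by blast
  note sq = Re_Im_square_half_integral[OF less_imp_le[OF \<open>d > 0\<close>]]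
  have "of_int ((P1\<^sup>2 - d * Q1\<^sup>2) + (P2\<^sup>2 - d * Q2\<^sup>2) + (P3\<^sup>2 - d * Q3\<^sup>2))
      = 4 * Re (x\<^sup>2 + y\<^sup>2 + z\<^sup>2)"
    using sq(1)[OF 1] sq(1)[OF 2] sq(1)[OF 3] by simp
  also have "\<dots> = of_int (-4)" using sum by simp
  finally have norm: "(P1\<^sup>2 - d * Q1\<^sup>2) + (P2\<^sup>2 - d * Q2\<^sup>2) + (P3\<^sup>2 - d * Q3\<^sup>2) = -4"
    by (simp only: of_int_eq_iff)
  have "of_int (P1 * Q1 + P2 * Q2 + P3 * Q3) * sqrt (of_int d) = 2 * Im (x\<^sup>2 + y\<^sup>2 + z\<^sup>2)"
    using sq(2)[OF 1] sq(2)[OF 2] sq(2)[OF 3] by (simp add: algebra_simps)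
  also have "\<dots> = 0" using sum by simp
  finally have "P1 * Q1 + P2 * Q2 + P3 * Q3 = 0"
    using \<open>d > 0\<close> by (simp del: of_int_add of_int_mult)
  with norm show False using three_squares_quadratic_form_ne_minus_4 \<open>d mod 8 = 7\<close> by blast
qed

section \<open>Powers of a quaternion\<close>

lemma quaternion_cayley_hamilton: "qmul u u = qsub (qsmul (2 * q1 u) u) (qscal (qnorm u))"
  by (cases u) (simp add: qmul_def qsub_def qsmul_def qscal_def qnorm_def power2_eq_square algebra_simps)

fun lucas_U :: "'a::comm_ring_1 \<Rightarrow> 'a \<Rightarrow> nat \<Rightarrow> 'a" where
  "lucas_U p q 0 = 0"
| "lucas_U p q (Suc 0) = 1"
| "lucas_U p q (Suc (Suc n)) = p * lucas_U p q (Suc n) - q * lucas_U p q n"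

lemma power_Suc_lucas_U:
  fixes x :: "'a::comm_ring_1"
  assumes "x\<^sup>2 = p * x - q"
  shows "x ^ Suc n = lucas_U p q (Suc n) * x - q * lucas_U p q n"
proof (induction n)
  case (Suc n)
  have "x ^ Suc (Suc n) = x * (lucas_U p q (Suc n) * x - q * lucas_U p q n)"
    using Suc by simp
  also have "\<dots> = lucas_U p q (Suc n) * x\<^sup>2 - q * lucas_U p q n * x"
    by (simp add: power2_eq_square algebra_simps)
  also have "\<dots> = lucas_U p q (Suc (Suc n)) * x - q * lucas_U p q (Suc n)"
    unfolding assms by (simp add: algebra_simps)
  finally show ?case .
qed simp

lemma qmul_qsub_qsmul_qscal:
  "qmul u (qsub (qsmul x u) (qscal y)) = qsub (qsmul x (qmul u u)) (qsmul y u)"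
  by (cases u) (simp add: qmul_def qsub_def qsmul_def qscal_def algebra_simps)

lemma qpow_Suc_lucas_U:
  assumes "qmul u u = qsub (qsmul p u) (qscal q)"
  shows "qpow u (Suc n) = qsub (qsmul (lucas_U p q (Suc n)) u) (qscal (q * lucas_U p q n))"
proof (induction n)
  case 0
  show ?case by (cases u) (simp add: qmul_def qsub_def qsmul_def qscal_def qone_def)
next
  case (Suc n)
  have "qpow u (Suc (Suc n))
      = qsub (qsmul (lucas_U p q (Suc n)) (qmul u u)) (qsmul (q * lucas_U p q n) u)"
    using Suc by (simp add: qmul_qsub_qsmul_qscal)
  then show ?case
    using assms by (cases u) (simp add: qsub_def qsmul_def qscal_def algebra_simps)
qed

lemma lucas_U_double_root:
  "lucas_U (2 * a) (a\<^sup>2) (Suc n) = of_nat (Suc n) * a ^ n"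
proof -
  have "lucas_U (2 * a) (a\<^sup>2) (Suc n) = of_nat (Suc n) * a ^ n
      \<and> lucas_U (2 * a) (a\<^sup>2) (Suc (Suc n)) = of_nat (Suc (Suc n)) * a ^ Suc n"
  proof (induction n)
    case (Suc n)
    have "lucas_U (2 * a) (a\<^sup>2) (Suc (Suc (Suc n)))
        = 2 * a * lucas_U (2 * a) (a\<^sup>2) (Suc (Suc n)) - a\<^sup>2 * lucas_U (2 * a) (a\<^sup>2) (Suc n)"
      by (rule lucas_U.simps(3))
    also have "\<dots> = 2 * a * (of_nat (Suc (Suc n)) * a ^ Suc n) - a\<^sup>2 * (of_nat (Suc n) * a ^ n)"
      using Suc by (simp only:)
    also have "\<dots> = (2 * of_nat (Suc (Suc n)) - of_nat (Suc n)) * a ^ Suc (Suc n)"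
      by (simp add: power2_eq_square algebra_simps)
    also have "\<dots> = of_nat (Suc (Suc (Suc n))) * a ^ Suc (Suc n)"
      by simp
    finally show ?case using Suc by blast
  qed simp
  then show ?thesis ..
qed

section \<open>Torsion units of norm \<open>\<plusminus>1\<close>\<close>

lemma qtorsion_nonscalar_trace:
  assumes nonscalar: "u \<noteq> qscal (q1 u)" and torsion: "qpow u m = qone" "0 < m"
    and norm: "cmod (qnorm u) = 1"
  shows "(q1 u)\<^sup>2 \<noteq> qnorm u" and "\<exists>l. cmod l = 1 \<and> 2 * q1 u = l + qnorm u * cnj l"
proof -
  define a c where "a = q1 u" and "c = qnorm u"
  obtain n where m: "m = Suc n" using torsion(2) by (cases m) auto
  have "qsub (qsmul (lucas_U (2 * a) c m) u) (qscal (c * lucas_U (2 * a) c n)) = qone"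
    using qpow_Suc_lucas_U[OF quaternion_cayley_hamilton] torsion(1) m by (simp add: a_def c_def)
  then have components: "lucas_U (2 * a) c m * a - c * lucas_U (2 * a) c n = 1"
    "lucas_U (2 * a) c m * qi u = 0" "lucas_U (2 * a) c m * qj u = 0"
    "lucas_U (2 * a) c m * qk u = 0"
    by (cases u; simp add: qsub_def qsmul_def qscal_def qone_def a_def)+
  moreover have "qi u \<noteq> 0 \<or> qj u \<noteq> 0 \<or> qk u \<noteq> 0"
    using nonscalar by (cases u) (simp add: qscal_def)
  ultimately have U: "lucas_U (2 * a) c m = 0" "- (c * lucas_U (2 * a) c n) = 1"
    by auto
  show "(q1 u)\<^sup>2 \<noteq> qnorm u"
  proof
    assume "(q1 u)\<^sup>2 = qnorm u"
    then have "c = a\<^sup>2" by (simp add: a_def c_def)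
    then have "lucas_U (2 * a) c m = of_nat m * a ^ n" and "a \<noteq> 0"
      using lucas_U_double_root[of a n] norm m by (auto simp: c_def)
    with U(1) m show False by (simp del: of_nat_Suc)
  qed
  define l where "l = a + csqrt (a\<^sup>2 - c)"
  have "(l - a)\<^sup>2 = a\<^sup>2 - c" by (simp add: l_def)
  then have root: "l\<^sup>2 = 2 * a * l - c" by (simp add: power2_eq_square algebra_simps)
  then have "l ^ m = 1" using power_Suc_lucas_U[OF root] U m by simp
  then have "cmod l ^ m = 1 ^ m" by (metis norm_one norm_power power_one)
  then have "cmod l = 1" using power_eq_imp_eq_base torsion(2) by (metis norm_ge_zero zero_le_one)
  then have "l * cnj l = 1" using complex_norm_square[of l] by simp
  moreover have "l * (2 * a - l) = c" using root by (simp add: power2_eq_square algebra_simps)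
  ultimately have "2 * a - l = c * cnj l" by (metis mult.commute mult.left_commute mult_1_right)
  then show "\<exists>l. cmod l = 1 \<and> 2 * q1 u = l + qnorm u * cnj l"
    using \<open>cmod l = 1\<close> unfolding a_def c_def by (metis add_diff_cancel_left' diff_add_cancel)
qed

lemma qnorm_qscal: "qnorm (qscal c) = c\<^sup>2"
  by (simp add: qnorm_def qscal_def)

lemma qmul_qone [simp]: "qmul u qone = u"
  by (cases u) (simp add: qmul_def qone_def)

lemma qhas_order_qone: "qhas_order qone 1"
  by (auto simp: qhas_order_def)

lemma qhas_order_minus_qone: "qhas_order (qscal (-1)) 2"
  by (auto simp: qhas_order_def qmul_def qone_def qscal_def numeral_2_eq_2 less_Suc_eq)

lemma qhas_order_4:
  assumes "q1 u = 0" and "qnorm u = 1"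
  shows "qhas_order u 4"
proof -
  have "qmul u u = qsub (qsmul 0 u) (qscal 1)" using quaternion_cayley_hamilton[of u] assms by simp
  note pow = qpow_Suc_lucas_U[OF this]
  have "qpow u 1 = u" "qpow u 2 = qscal (-1)" "qpow u 3 = qsmul (-1) u" "qpow u 4 = qone"
    using pow[of 0] pow[of 1] pow[of 2] pow[of 3]
    by (cases u; simp add: qsub_def qsmul_def qscal_def qone_def numeral_eq_Suc)+
  moreover have "u \<noteq> qone" "qscal (-1) \<noteq> qone" "qsmul (-1) u \<noteq> qone"
    using assms(1) by (auto simp: qone_def qscal_def qsmul_def)
  moreover have "m = 1 \<or> m = 2 \<or> m = 3" if "0 < m" "m < 4" for m :: nat
    using that by auto
  ultimately show ?thesis unfolding qhas_order_def by (metis zero_less_numeral)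
qed

lemma qtorsion_iff_if_qnorm_eq_1:
  assumes "d > 0" "q1 u \<in> ringOfIntegers d" "qnorm u = 1"
  shows "qtorsion u \<longleftrightarrow>
    q1 u \<in> {-1, 0, 1} \<and> (qhas_order u 1 \<or> qhas_order u 2 \<or> qhas_order u 4)"
proof
  assume "qtorsion u"
  then obtain m where m: "qpow u m = qone" "0 < m" unfolding qtorsion_def by blast
  show "q1 u \<in> {-1, 0, 1} \<and> (qhas_order u 1 \<or> qhas_order u 2 \<or> qhas_order u 4)"
  proof (cases "u = qscal (q1 u)")
    case True
    then have "(q1 u)\<^sup>2 = 1" using assms(3) qnorm_qscal[of "q1 u"] by simp
    then have "q1 u = 1 \<or> q1 u = -1" by (simp add: power2_eq_1_iff)
    then show ?thesis
      using True qhas_order_qone qhas_order_minus_qone by (auto simp: qone_def qscal_def)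
  next
    case False
    obtain l where l: "cmod l = 1" "2 * q1 u = l + cnj l"
      using qtorsion_nonscalar_trace(2)[OF False m] assms(3) by auto
    have "(q1 u)\<^sup>2 \<noteq> 1" using qtorsion_nonscalar_trace(1)[OF False m] assms(3) by simp
    have "Im (q1 u) = 0" and "\<bar>Re (q1 u)\<bar> \<le> 1"
      using arg_cong[OF l(2), of Im] arg_cong[OF l(2), of Re] abs_Re_le_cmod[of l] l(1) by auto
    then obtain k where k: "q1 u = of_int k" "\<bar>k\<bar> \<le> 1"
      using ringOfIntegers_real_imp_Ints[OF assms(1,2)] by (auto elim!: Ints_cases)
    have "k = -1 \<or> k = 0 \<or> k = 1" using k(2) by auto
    then have "q1 u = 0" using k(1) \<open>(q1 u)\<^sup>2 \<noteq> 1\<close> by auto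
    then show ?thesis using qhas_order_4 assms(3) by simp
  qed
next
  assume "q1 u \<in> {-1, 0, 1} \<and> (qhas_order u 1 \<or> qhas_order u 2 \<or> qhas_order u 4)"
  then show "qtorsion u" unfolding qhas_order_def qtorsion_def by blast
qed

lemma not_qtorsion_if_qnorm_eq_minus_1:
  assumes d: "d > 0" "squarefree d" "d mod 8 = 7"
    and u: "u \<in> quatOver (ringOfIntegers d)" "qnorm u = -1"
  shows "\<not> qtorsion u"
proof
  assume "qtorsion u"
  then obtain m where m: "qpow u m = qone" "0 < m" unfolding qtorsion_def by blast
  have coeffs: "q1 u \<in> ringOfIntegers d" "qi u \<in> ringOfIntegers d"
    "qj u \<in> ringOfIntegers d" "qk u \<in> ringOfIntegers d"
    using u(1) by (simp_all add: quatOver_def)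
  note no_three_squares = ringOfIntegers_sum_three_squares_ne_minus_1[OF d]
  have "q1 u = 0"
  proof (cases "u = qscal (q1 u)")
    case True
    then have "(q1 u)\<^sup>2 + 0\<^sup>2 + 0\<^sup>2 = -1" using u(2) qnorm_qscal[of "q1 u"] by simp
    then show ?thesis using no_three_squares coeffs(1) zero_in_ringOfIntegers by blast
  next
    case False
    obtain l where l: "cmod l = 1" "2 * q1 u = l - cnj l"
      using qtorsion_nonscalar_trace(2)[OF False m] u(2) by auto
    have "Re (q1 u) = 0" and "\<bar>Im (q1 u)\<bar> \<le> 1"
      using arg_cong[OF l(2), of Re] arg_cong[OF l(2), of Im] abs_Im_le_cmod[of l] l(1) by auto
    moreover have "d > 4" using d(1,3) by presburger
    ultimately show ?thesis
      using ringOfIntegers_Im_eq_0_if_small d(2) coeffs(1) by (simp add: complex_eq_iff)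
  qed
  then have "(qi u)\<^sup>2 + (qj u)\<^sup>2 + (qk u)\<^sup>2 = -1" using u(2) by (simp add: qnorm_def)
  then show False using no_three_squares coeffs(2-4) by blast
qed

theorem mainTheorem14:
  fixes d :: int and u :: cquat
  assumes "d > 0" and "squarefree d" and "d mod 8 = 7"
    and "u \<in> quatUnits (ringOfIntegers d)"
  shows "qmul u u = qsub (qsmul (2 * q1 u) u) (qscal (qnorm u))
         \<and> (qnorm u = 1 \<longrightarrow>
              (qtorsion u \<longleftrightarrow>
                 (q1 u \<in> {-1, 0, 1} \<and> (qhas_order u 1 \<or> qhas_order u 2 \<or> qhas_order u 4))))
         \<and> (qnorm u = -1 \<longrightarrow> \<not> qtorsion u)"
proof -
  have "u \<in> quatOver (ringOfIntegers d)" using assms(4) by (simp add: quatUnits_def)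
  then have "q1 u \<in> ringOfIntegers d" by (simp add: quatOver_def)
  show ?thesis
    using quaternion_cayley_hamilton qtorsion_iff_if_qnorm_eq_1[OF assms(1) \<open>q1 u \<in> ringOfIntegers d\<close>]
      not_qtorsion_if_qnorm_eq_minus_1[OF assms(1-3) \<open>u \<in> quatOver (ringOfIntegers d)\<close>]
    by blast
qed

end
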